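(* Let $S$ be a complete metric space with distance $d$, and let $\preceq$ be a topological orientation on $S$. Assume that every right-bounded pair in $S$ has a join, and that $h:S\to\mathbb{R}$ is continuous and a discriminator. Then $(S,\preceq)$ is a cc sponge.
   Context: An orientation on $S$ is a reflexive, antisymmetric binary relation $\preceq$; it is a topological orientation if $\preceq$ is a closed subset of $S\times S$. For $P\subseteq S$: $P$ is right-bounded if some $s\in S$ has $p\preceq s$ for all $p\in P$. The join of $P$ is an element $x$ with $p\preceq x$ for all $p\in P$ and $x\preceq y$ for every $y$ with $p\preceq y$ for all $p\in P$. $(S,\preceq)$ is a cc sponge if every nonempty right-bounded subset has a join. A function $h:S\to\mathbb{R}$ is a discriminator if for every $\varepsilon>0$ there is $\delta>0$ such that for all $x,y\in S$, $x\preceq y$ and $h(y)<h(x)+\delta$ imply $d(x,y)<\varepsilon$. *)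

theory Defs
  imports "HOL-Analysis.Analysis"
begin

definition orientation :: "('a \<Rightarrow> 'a \<Rightarrow> bool) \<Rightarrow> bool" where
  "orientation le \<longleftrightarrow> (\<forall>x. le x x) \<and> (\<forall>x y. le x y \<and> le y x \<longrightarrow> x = y)"

definition topological_orientation :: "('a::topological_space \<Rightarrow> 'a \<Rightarrow> bool) \<Rightarrow> bool" where
  "topological_orientation le \<longleftrightarrow> orientation le \<and> closed {(x, y). le x y}"

definition right_bounded :: "('a \<Rightarrow> 'a \<Rightarrow> bool) \<Rightarrow> 'a set \<Rightarrow> bool" where
  "right_bounded le P \<longleftrightarrow> (\<exists>s. \<forall>p\<in>P. le p s)"

definition is_join :: "('a \<Rightarrow> 'a \<Rightarrow> bool) \<Rightarrow> 'a set \<Rightarrow> 'a \<Rightarrow> bool" where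
  "is_join le P x \<longleftrightarrow> (\<forall>p\<in>P. le p x) \<and> (\<forall>y. (\<forall>p\<in>P. le p y) \<longrightarrow> le x y)"

definition cc_sponge :: "('a \<Rightarrow> 'a \<Rightarrow> bool) \<Rightarrow> bool" where
  "cc_sponge le \<longleftrightarrow> orientation le \<and>
     (\<forall>P. P \<noteq> {} \<and> right_bounded le P \<longrightarrow> (\<exists>x. is_join le P x))"

definition discriminator :: "('a::metric_space \<Rightarrow> 'a \<Rightarrow> bool) \<Rightarrow> ('a \<Rightarrow> real) \<Rightarrow> bool" where
  "discriminator le h \<longleftrightarrow> (\<forall>\<epsilon>>0. \<exists>\<delta>>0. \<forall>x y. le x y \<and> h y < h x + \<delta> \<longrightarrow> dist x y < \<epsilon>)"

end

(* Fix a nonempty right-bounded P and let L be the set of lower bounds of all upper bounds of P.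
   Pairwise joins make L directed, the closedness of the orientation makes L closed, and h is
   monotone, hence bounded on L by h of any upper bound. Take x_n in L with h(x_n) tending to
   sup h(L): any two of them lie below a common z in L with h z close to h(x_n), so the
   discriminator makes the sequence Cauchy. Its limit x lies in L and attains sup h(L); for y in L
   a common upper bound z of x and y in L has h z <= h x, forcing z = x. So x is the greatest
   element of L, which is the join of P. *)
theory Submission
  imports Defs
begin

definition directed_on :: "('a \<Rightarrow> 'a \<Rightarrow> bool) \<Rightarrow> 'a set \<Rightarrow> bool" where
  "directed_on le L \<longleftrightarrow> (\<forall>a\<in>L. \<forall>b\<in>L. \<exists>z\<in>L. le a z \<and> le b z)"

definition upper_bounds :: "('a \<Rightarrow> 'a \<Rightarrow> bool) \<Rightarrow> 'a set \<Rightarrow> 'a set" where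
  "upper_bounds le P = {s. \<forall>p\<in>P. le p s}"

definition lower_bounds :: "('a \<Rightarrow> 'a \<Rightarrow> bool) \<Rightarrow> 'a set \<Rightarrow> 'a set" where
  "lower_bounds le U = {s. \<forall>u\<in>U. le s u}"

lemma discriminator_eq:
  assumes "discriminator le h" "le x z" "h z \<le> h x"
  shows "x = z"
proof -
  have "dist x z < e" if "e > 0" for e
  proof -
    obtain d where "d > 0" "\<And>x y. le x y \<Longrightarrow> h y < h x + d \<Longrightarrow> dist x y < e"
      using assms(1) \<open>e > 0\<close> unfolding discriminator_def by blast
    then show ?thesis using assms(2,3) by force
  qed
  then show ?thesis
    by (metis less_irrefl zero_less_dist_iff)
qed

lemma discriminator_mono:
  assumes "discriminator le h" "le x z"
  shows "h x \<le> h z"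
  using discriminator_eq[OF assms] by fastforce

lemma discriminator_Cauchy:
  assumes disc: "discriminator le h" and dir: "directed_on le L"
    and bound: "\<And>x. x \<in> L \<Longrightarrow> h x \<le> M"
    and X: "\<And>n. X n \<in> L" and lim: "(\<lambda>n. h (X n)) \<longlonglongrightarrow> M"
  shows "Cauchy X"
proof (rule metric_CauchyI)
  fix e :: real
  assume "e > 0"
  then obtain d where "d > 0" and close: "\<And>x y. le x y \<Longrightarrow> h y < h x + d \<Longrightarrow> dist x y < e/2"
    using disc unfolding discriminator_def by (metis half_gt_zero)
  obtain N where N: "\<And>n. n \<ge> N \<Longrightarrow> M - d < h (X n)"
    using order_tendstoD(1)[OF lim, of "M - d"] \<open>d > 0\<close>
    unfolding eventually_sequentially by auto
  have "dist (X m) (X n) < e" if "m \<ge> N" "n \<ge> N" for m n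
  proof -
    obtain z where z: "z \<in> L" "le (X m) z" "le (X n) z"
      using dir X unfolding directed_on_def by blast
    have "dist (X k) z < e/2" if "k \<ge> N" "le (X k) z" for k
      using close[OF that(2)] N[OF that(1)] bound[OF z(1)] by linarith
    then have "dist (X m) z < e/2" "dist (X n) z < e/2"
      using that z by auto
    then show ?thesis
      using dist_triangle2[of "X m" "X n" z] by linarith
  qed
  then show "\<exists>N. \<forall>m\<ge>N. \<forall>n\<ge>N. dist (X m) (X n) < e" by blast
qed

lemma discriminator_directed_has_greatest:
  fixes h :: "'a::complete_space \<Rightarrow> real"
  assumes disc: "discriminator le h" and cont: "continuous_on L h"
    and "closed L" "L \<noteq> {}" and dir: "directed_on le L" and bdd: "bdd_above (h ` L)"
  shows "\<exists>x\<in>L. \<forall>y\<in>L. le y x"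
proof -
  define M where "M = Sup (h ` L)"
  have bound: "h x \<le> M" if "x \<in> L" for x
    unfolding M_def using bdd that by (simp add: cSup_upper)
  have "M \<in> closure (h ` L)"
    unfolding M_def using \<open>L \<noteq> {}\<close> bdd by (simp add: closure_contains_Sup)
  then obtain Y where Y: "\<And>n. Y n \<in> h ` L" and limY: "Y \<longlonglongrightarrow> M"
    unfolding closure_sequential by blast
  have "\<forall>n. \<exists>x. x \<in> L \<and> Y n = h x"
    using Y by blast
  then obtain X where X: "\<And>n. X n \<in> L" and Y_eq: "\<And>n. Y n = h (X n)"
    by metis
  have limM: "(\<lambda>n. h (X n)) \<longlonglongrightarrow> M"
    using limY by (simp add: Y_eq[symmetric])
  have "Cauchy X"
    using discriminator_Cauchy[OF disc dir bound X limM] .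
  then obtain x where lim: "X \<longlonglongrightarrow> x"
    using Cauchy_convergent_iff convergent_def by blast
  have "x \<in> L"
    using closed_sequentially[OF \<open>closed L\<close> X lim] .
  have "(\<lambda>n. h (X n)) \<longlonglongrightarrow> h x"
    using continuous_on_tendsto_compose[OF cont lim \<open>x \<in> L\<close>] X by simp
  then have "h x = M"
    using limM LIMSEQ_unique by blast
  have "le y x" if "y \<in> L" for y
  proof -
    obtain z where z: "z \<in> L" "le x z" "le y z"
      using dir \<open>x \<in> L\<close> \<open>y \<in> L\<close> unfolding directed_on_def by blast
    have "x = z"
      using discriminator_eq[OF disc z(2)] bound[OF z(1)] \<open>h x = M\<close> by simp
    then show ?thesis using z(3) by simp
  qed
  then show ?thesis using \<open>x \<in> L\<close> by blast
qed

lemma closed_lower_bounds: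
  assumes "closed {(x, y). le x y}"
  shows "closed (lower_bounds le U)"
proof -
  have "closed ((\<lambda>x. (x, u)) -` {(x, y). le x y})" for u
    by (intro continuous_closed_vimage assms continuous_intros)
  then have "closed (\<Inter>u\<in>U. (\<lambda>x. (x, u)) -` {(x, y). le x y})"
    by blast
  moreover have "lower_bounds le U = (\<Inter>u\<in>U. (\<lambda>x. (x, u)) -` {(x, y). le x y})"
    unfolding lower_bounds_def by auto
  ultimately show ?thesis by simp
qed

lemma directed_on_lower_bounds:
  assumes joins: "\<And>a b. right_bounded le {a, b} \<Longrightarrow> \<exists>x. is_join le {a, b} x"
    and "U \<noteq> {}"
  shows "directed_on le (lower_bounds le U)"
  unfolding directed_on_def
proof (intro ballI)
  fix a b
  assume ab: "a \<in> lower_bounds le U" "b \<in> lower_bounds le U"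
  then have "right_bounded le {a, b}"
    using \<open>U \<noteq> {}\<close> unfolding right_bounded_def lower_bounds_def by auto
  then obtain j where j: "is_join le {a, b} j"
    using joins by blast
  then have "j \<in> lower_bounds le U"
    using ab unfolding is_join_def lower_bounds_def by auto
  then show "\<exists>z\<in>lower_bounds le U. le a z \<and> le b z"
    using j unfolding is_join_def by auto
qed

lemma is_join_if_greatest_lower_bound_of_upper_bounds:
  assumes "x \<in> lower_bounds le (upper_bounds le P)"
    and "\<And>y. y \<in> lower_bounds le (upper_bounds le P) \<Longrightarrow> le y x"
  shows "is_join le P x"
  using assms unfolding is_join_def lower_bounds_def upper_bounds_def by auto

theorem mainTheorem4:
  fixes le :: "'a::complete_space \<Rightarrow> 'a \<Rightarrow> bool"
    and h :: "'a \<Rightarrow> real"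
  assumes "topological_orientation le"
    and "\<And>a b. right_bounded le {a, b} \<Longrightarrow> \<exists>x. is_join le {a, b} x"
    and "continuous_on UNIV h"
    and "discriminator le h"
  shows "cc_sponge le"
proof -
  have "\<exists>x. is_join le P x" if "P \<noteq> {}" "right_bounded le P" for P
  proof -
    define L where "L = lower_bounds le (upper_bounds le P)"
    obtain u where u: "u \<in> upper_bounds le P"
      using \<open>right_bounded le P\<close> unfolding right_bounded_def upper_bounds_def by auto
    have "P \<subseteq> L"
      unfolding L_def lower_bounds_def upper_bounds_def by auto
    then have "L \<noteq> {}"
      using \<open>P \<noteq> {}\<close> by blast
    have "bdd_above (h ` L)"
      using discriminator_mono[OF assms(4)] u unfolding L_def lower_bounds_def
      by (intro bdd_aboveI[of _ "h u"]) auto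
    have "closed L"
      using assms(1) closed_lower_bounds unfolding L_def topological_orientation_def by blast
    have "directed_on le L"
      unfolding L_def using directed_on_lower_bounds[OF assms(2)] u by blast
    obtain x where "x \<in> L" "\<forall>y\<in>L. le y x"
      using discriminator_directed_has_greatest[OF assms(4) continuous_on_subset[OF assms(3)]
          \<open>closed L\<close> \<open>L \<noteq> {}\<close> \<open>directed_on le L\<close> \<open>bdd_above (h ` L)\<close>]
      by blast
    then have "is_join le P x"
      unfolding L_def by (intro is_join_if_greatest_lower_bound_of_upper_bounds) auto
    then show ?thesis ..
  qed
  then show ?thesis
    using assms(1) unfolding cc_sponge_def topological_orientation_def by blast
qed

end
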